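(* Let $\mathcal{H}$ be a finite nonempty set of humans with embeddings $\mathbf{e}_h\in\mathbb{R}^d$, let $\mathcal{L}$ be a finite set of agents with embeddings $\mathbf{e}_l\in\mathbb{R}^d$, and let $\operatorname{dist}$ be a metric on $\mathbb{R}^d$. Let $\rho\ge0$ and suppose that for each $h\in\mathcal{H}$ a proxy agent $l_h$ with embedding $\mathbf{e}_{l_h}$ is given satisfying $\operatorname{dist}(\mathbf{e}_h,\mathbf{e}_{l_h})\le\rho$; let $\tilde{\mathcal{L}}=\{l_h: h\in\mathcal{H}\}$ (an indexed family, one proxy per human). Let $D_{\max}$ be strictly larger than every distance between any two of the embeddings of elements of $\mathcal{H}\cup\mathcal{L}\cup\tilde{\mathcal{L}}$. For any finite indexed family $S$ of objects with embeddings, define $$f(S)=\frac{1}{|\mathcal{H}|}\sum_{h\in\mathcal{H}}\Big[D_{\max}-\min_{s\in S}\operatorname{dist}(\mathbf{e}_h,\mathbf{e}_s)\Big],$$ with $\min$ over the empty family equal to $D_{\max}$. Let $1\le M\le|\mathcal{H}|$, let $L^*_{\mathcal{L}}\in\arg\max_{L\subseteq\mathcal{L},|L|\le M}f(L)$, let $L^*_{\mathcal{H}}\in\arg\max_{S\subseteq\mathcal{H},|S|\le M}f(S)$ (humans themselves used as candidates, with their own embeddings), and define the human coverage ratio $\gamma=f(L^*_{\mathcal{H}})/f(L^*_{\mathcal{L}})$ (assume $f(L^*_{\mathcal{L}})>0$). Let $L^{\text{greedy}}_{\tilde{\mathcal{L}}}$ be the output of the greedy algorithm on $\tilde{\mathcal{L}}$: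 start with $L=\emptyset$ and for $i=1,\dots,M$ add an element $l\in\tilde{\mathcal{L}}\setminus L$ maximizing $f(L\cup\{l\})-f(L)$ (ties broken arbitrarily). Then $$f\big(L^{\text{greedy}}_{\tilde{\mathcal{L}}}\big)\;\ge\;\Big(1-\frac1e\Big)\Big(\gamma\cdot f(L^*_{\mathcal{L}})-\rho\Big).$$
   Context: Here $\rho$ is the "imitation error" bound: each proxy $l_h$ lies in the $\rho$-neighborhood of $h$ in embedding space. Humans and agents are both compared via their behavior embeddings in $\mathbb{R}^d$ and the metric $\operatorname{dist}$. *)

theory Defs
  imports "HOL-Analysis.Analysis"
begin

definition min_dist :: "('v \<Rightarrow> 'v \<Rightarrow> real) \<Rightarrow> real \<Rightarrow> 'v \<Rightarrow> 'i set \<Rightarrow> ('i \<Rightarrow> 'v) \<Rightarrow> real" where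
  "min_dist d Dmax x I e = (if I = {} then Dmax else Min ((\<lambda>s. d x (e s)) ` I))"

definition cov :: "('v \<Rightarrow> 'v \<Rightarrow> real) \<Rightarrow> real \<Rightarrow> 'h set \<Rightarrow> ('h \<Rightarrow> 'v) \<Rightarrow> 'i set \<Rightarrow> ('i \<Rightarrow> 'v) \<Rightarrow> real" where
  "cov d Dmax H eh I e = (\<Sum>h\<in>H. Dmax - min_dist d Dmax (eh h) I e) / real (card H)"

definition greedy_run :: "('v \<Rightarrow> 'v \<Rightarrow> real) \<Rightarrow> real \<Rightarrow> 'h set \<Rightarrow> ('h \<Rightarrow> 'v) \<Rightarrow> 'i set \<Rightarrow> ('i \<Rightarrow> 'v) \<Rightarrow> nat \<Rightarrow> 'i list \<Rightarrow> bool" where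
  "greedy_run d Dmax H eh C e M gs \<longleftrightarrow>
     length gs = M \<and>
     (\<forall>i<M. gs ! i \<in> C - set (take i gs) \<and>
        (\<forall>l\<in>C - set (take i gs).
           cov d Dmax H eh (insert l (set (take i gs))) e - cov d Dmax H eh (set (take i gs)) e
           \<le> cov d Dmax H eh (insert (gs ! i) (set (take i gs))) e - cov d Dmax H eh (set (take i gs)) e))"

end

theory Submission
  imports Defs
begin

text \<open>The coverage objective is monotone and submodular, so the classical greedy analysis
  (the optimality gap shrinks by a factor \<open>1 - 1/M\<close> per step) gives a \<open>1 - 1/e\<close>
  approximation of the best \<open>M\<close>-subset of the proxies. By the triangle inequality, swapping
  each human for its proxy raises every distance by at most \<open>\<rho>\<close>, so that best subset covers
  at least as well as the humans' optimum minus \<open>\<rho>\<close>, which is \<open>\<gamma>\<close> times the agents' optimum.\<close>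

lemma min_dist_le:
  "finite I \<Longrightarrow> i \<in> I \<Longrightarrow> min_dist d Dmax x I e \<le> d x (e i)"
  by (auto simp: min_dist_def)

lemma min_dist_le_Dmax:
  assumes "finite I" "\<forall>i\<in>I. d x (e i) \<le> Dmax"
  shows "min_dist d Dmax x I e \<le> Dmax"
proof (cases "I = {}")
  case False
  then obtain i where "i \<in> I" by auto
  with assms show ?thesis using min_dist_le[of I i d Dmax x e] by auto
qed (simp add: min_dist_def)

lemma min_dist_attained:
  assumes "finite I" "I \<noteq> {}"
  obtains i where "i \<in> I" "min_dist d Dmax x I e = d x (e i)"
proof -
  have "Min ((\<lambda>s. d x (e s)) ` I) \<in> (\<lambda>s. d x (e s)) ` I"
    using assms by (intro Min_in) auto
  then obtain i where "i \<in> I" "Min ((\<lambda>s. d x (e s)) ` I) = d x (e i)" by auto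
  with assms that show ?thesis by (simp add: min_dist_def)
qed

lemma min_dist_insert:
  assumes "finite I" "d x (e u) \<le> Dmax" "\<forall>i\<in>I. d x (e i) \<le> Dmax"
  shows "min_dist d Dmax x (insert u I) e = min (d x (e u)) (min_dist d Dmax x I e)"
  using assms by (cases "I = {}") (auto simp: min_dist_def min_def)

lemma min_dist_insert_le:
  assumes "finite I" "\<forall>i\<in>insert u I. d x (e i) \<le> Dmax"
  shows "min_dist d Dmax x (insert u I) e \<le> min_dist d Dmax x I e"
  using assms by (simp add: min_dist_insert)

text \<open>Submodularity of the pointwise coverage \<open>Dmax - min_dist\<close>: if \<open>Q\<close> is closer to \<open>x\<close> than
  \<open>G\<close>, the nearest point of \<open>Q\<close> alone already realises the whole improvement.\<close>

lemma min_dist_diff_le_sum_insert: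
  assumes G: "finite G" and Q: "finite Q" and bounded: "\<forall>i\<in>G \<union> Q. d x (e i) \<le> Dmax"
  shows "min_dist d Dmax x G e - min_dist d Dmax x Q e
     \<le> (\<Sum>u\<in>Q - G. min_dist d Dmax x G e - min_dist d Dmax x (insert u G) e)"
    (is "?mG - ?mQ \<le> (\<Sum>u\<in>Q - G. ?gain u)")
proof -
  have gain_nonneg: "0 \<le> ?gain u" if "u \<in> Q - G" for u
    using min_dist_insert_le[OF G, of u d x e Dmax] that bounded by auto
  show ?thesis
  proof (cases "?mG \<le> ?mQ")
    case True
    have "0 \<le> (\<Sum>u\<in>Q - G. ?gain u)" by (rule sum_nonneg) (rule gain_nonneg)
    with True show ?thesis by linarith
  next
    case False
    have "Q \<noteq> {}"
      using False min_dist_le_Dmax[OF G, of d x e Dmax] bounded by (auto simp: min_dist_def)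
    then obtain u where u: "u \<in> Q" "?mQ = d x (e u)"
      using min_dist_attained[OF Q] by metis
    have "u \<notin> G" using min_dist_le[OF G, of u d Dmax x e] u False by auto
    have "?mG - ?mQ \<le> ?gain u"
      using u bounded by (simp add: min_dist_insert[OF G])
    also have "\<dots> \<le> (\<Sum>u\<in>Q - G. ?gain u)"
      using u \<open>u \<notin> G\<close> gain_nonneg Q by (intro member_le_sum) auto
    finally show ?thesis .
  qed
qed

lemma min_dist_le_shift:
  assumes "finite I" "0 \<le> \<rho>" "\<forall>i\<in>I. d x (e' i) \<le> d x (e i) + \<rho>"
  shows "min_dist d Dmax x I e' \<le> min_dist d Dmax x I e + \<rho>"
proof (cases "I = {}")
  case False
  then obtain i where "i \<in> I" "min_dist d Dmax x I e = d x (e i)"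
    using min_dist_attained[OF assms(1)] by metis
  with assms show ?thesis using min_dist_le[of I i d Dmax x e'] by fastforce
qed (simp add: min_dist_def assms(2))

lemma cov_empty: "cov d Dmax H eh {} e = 0"
  by (simp add: cov_def min_dist_def)

lemma cov_nonneg:
  assumes "finite S" "\<forall>h\<in>H. \<forall>s\<in>S. d (eh h) (e s) \<le> Dmax"
  shows "0 \<le> cov d Dmax H eh S e"
  unfolding cov_def using assms by (intro divide_nonneg_nonneg sum_nonneg) (auto intro: min_dist_le_Dmax)

lemma cov_diff:
  "cov d Dmax H eh S e - cov d Dmax H eh T e'
     = (\<Sum>h\<in>H. min_dist d Dmax (eh h) T e' - min_dist d Dmax (eh h) S e) / real (card H)"
  unfolding cov_def by (simp add: diff_divide_distrib[symmetric] sum_subtractf[symmetric])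

lemma cov_insert_ge:
  assumes "finite G" "\<forall>h\<in>H. \<forall>s\<in>insert u G. d (eh h) (e s) \<le> Dmax"
  shows "cov d Dmax H eh G e \<le> cov d Dmax H eh (insert u G) e"
proof -
  have "0 \<le> cov d Dmax H eh (insert u G) e - cov d Dmax H eh G e"
    unfolding cov_diff using assms
    by (intro divide_nonneg_nonneg sum_nonneg) (auto dest: min_dist_insert_le)
  then show ?thesis by simp
qed

lemma cov_diff_le_sum_marginal_gains:
  assumes G: "finite G" and Q: "finite Q" and bounded: "\<forall>h\<in>H. \<forall>s\<in>G \<union> Q. d (eh h) (e s) \<le> Dmax"
  shows "cov d Dmax H eh Q e - cov d Dmax H eh G e
     \<le> (\<Sum>u\<in>Q - G. cov d Dmax H eh (insert u G) e - cov d Dmax H eh G e)"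
proof -
  let ?m = "\<lambda>S h. min_dist d Dmax (eh h) S e"
  have "cov d Dmax H eh Q e - cov d Dmax H eh G e = (\<Sum>h\<in>H. ?m G h - ?m Q h) / real (card H)"
    by (rule cov_diff)
  also have "\<dots> \<le> (\<Sum>h\<in>H. \<Sum>u\<in>Q - G. ?m G h - ?m (insert u G) h) / real (card H)"
    using bounded by (intro divide_right_mono sum_mono min_dist_diff_le_sum_insert[OF G Q]) auto
  also have "\<dots> = (\<Sum>u\<in>Q - G. \<Sum>h\<in>H. ?m G h - ?m (insert u G) h) / real (card H)"
    by (subst sum.swap) simp
  also have "\<dots> = (\<Sum>u\<in>Q - G. cov d Dmax H eh (insert u G) e - cov d Dmax H eh G e)"
    by (simp add: cov_diff sum_divide_distrib)
  finally show ?thesis .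
qed

lemma cov_shift_ge:
  assumes "finite H" "H \<noteq> {}" "finite S" "0 \<le> \<rho>"
    and "\<forall>h\<in>H. \<forall>s\<in>S. d (eh h) (e' s) \<le> d (eh h) (e s) + \<rho>"
  shows "cov d Dmax H eh S e - \<rho> \<le> cov d Dmax H eh S e'"
proof -
  have card: "0 < real (card H)" using assms(1,2) by (simp add: card_gt_0_iff)
  have shift: "min_dist d Dmax (eh h) S e' - min_dist d Dmax (eh h) S e \<le> \<rho>" if "h \<in> H" for h
    using min_dist_le_shift[OF assms(3,4), of d "eh h" e' e Dmax] assms(5) that by simp
  have "cov d Dmax H eh S e - cov d Dmax H eh S e'
      = (\<Sum>h\<in>H. min_dist d Dmax (eh h) S e' - min_dist d Dmax (eh h) S e) / real (card H)"
    by (rule cov_diff)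
  also have "\<dots> \<le> (\<Sum>h\<in>H. \<rho>) / real (card H)"
    using shift card by (intro divide_right_mono sum_mono) auto
  also have "\<dots> = \<rho>" using card by simp
  finally show ?thesis by simp
qed

lemma one_minus_inverse_power_le_exp:
  assumes "1 \<le> M"
  shows "(1 - 1 / real M) ^ M \<le> 1 / exp 1"
proof -
  have "(1 - 1 / real M) ^ M \<le> exp (- 1 / real M) ^ M"
    using assms exp_ge_add_one_self[of "- 1 / real M"] by (intro power_mono) auto
  also have "\<dots> = exp (real M * (- 1 / real M))" by (rule exp_of_nat_mult[symmetric])
  also have "\<dots> = 1 / exp 1" using assms by (simp add: exp_minus field_simps)
  finally show ?thesis .
qed

lemma contracting_gap_bound:
  fixes F :: "nat \<Rightarrow> real"
  assumes M: "1 \<le> M" and "F 0 = 0" "0 \<le> OPT"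
    and step: "\<And>i. i < M \<Longrightarrow> OPT - F (Suc i) \<le> (1 - 1 / real M) * (OPT - F i)"
  shows "(1 - 1 / exp 1) * OPT \<le> F M"
proof -
  have q: "0 \<le> 1 - 1 / real M" using M by simp
  have gap: "OPT - F i \<le> (1 - 1 / real M) ^ i * OPT" if "i \<le> M" for i
    using that
  proof (induction i)
    case 0
    then show ?case using \<open>F 0 = 0\<close> by simp
  next
    case (Suc i)
    have "OPT - F (Suc i) \<le> (1 - 1 / real M) * (OPT - F i)" using step Suc by simp
    also have "\<dots> \<le> (1 - 1 / real M) * ((1 - 1 / real M) ^ i * OPT)"
      using Suc q by (intro mult_left_mono) auto
    finally show ?case by simp
  qed
  have "(1 - 1 / exp 1) * OPT \<le> (1 - (1 - 1 / real M) ^ M) * OPT"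
    using one_minus_inverse_power_le_exp[OF M] \<open>0 \<le> OPT\<close> by (intro mult_right_mono) auto
  also have "\<dots> \<le> F M" using gap[of M] by (simp add: algebra_simps)
  finally show ?thesis .
qed

lemma greedy_run_set_subset:
  "greedy_run d Dmax H eh C e M gs \<Longrightarrow> set gs \<subseteq> C"
  by (auto simp: greedy_run_def in_set_conv_nth)

lemma greedy_run_gap_contracts:
  assumes greedy: "greedy_run d Dmax H eh C e M gs" and i: "i < M"
    and bounded: "\<forall>h\<in>H. \<forall>c\<in>C. d (eh h) (e c) \<le> Dmax"
    and B: "B \<subseteq> C" "finite B" "card B \<le> M"
  shows "cov d Dmax H eh B e - cov d Dmax H eh (set (take (Suc i) gs)) e
    \<le> (1 - 1 / real M) * (cov d Dmax H eh B e - cov d Dmax H eh (set (take i gs)) e)"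
proof -
  let ?f = "\<lambda>S. cov d Dmax H eh S e"
  let ?G = "set (take i gs)"
  define \<delta> where "\<delta> = ?f (insert (gs ! i) ?G) - ?f ?G"
  have G: "?G \<subseteq> C"
    using set_take_subset greedy_run_set_subset[OF greedy] by (rule order_trans)
  have "length gs = M" and "gs ! i \<in> C - ?G \<and> (\<forall>u\<in>C - ?G. ?f (insert u ?G) - ?f ?G \<le> \<delta>)"
    using greedy i unfolding greedy_run_def \<delta>_def by auto
  then have take_Suc: "set (take (Suc i) gs) = insert (gs ! i) ?G"
    and gi: "gs ! i \<in> C - ?G" and gi_max: "\<forall>u\<in>C - ?G. ?f (insert u ?G) - ?f ?G \<le> \<delta>"
    using i by (simp_all add: take_Suc_conv_app_nth)
  have "?f ?G \<le> ?f (insert (gs ! i) ?G)"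
    using G gi bounded by (intro cov_insert_ge) auto
  then have "0 \<le> \<delta>" by (simp add: \<delta>_def)
  have "?f B - ?f ?G \<le> (\<Sum>u\<in>B - ?G. ?f (insert u ?G) - ?f ?G)"
    using G B bounded by (intro cov_diff_le_sum_marginal_gains) auto
  also have "\<dots> \<le> real (card (B - ?G)) * \<delta>"
    using gi_max B(1) by (intro sum_bounded_above) blast
  also have "\<dots> \<le> real M * \<delta>"
    using \<open>0 \<le> \<delta>\<close> B card_mono[of B "B - ?G"] by (intro mult_right_mono) auto
  finally have "(?f B - ?f ?G) / real M \<le> \<delta>"
    using i by (simp add: divide_le_eq mult.commute)
  moreover have "(1 - 1 / real M) * (?f B - ?f ?G) = (?f B - ?f ?G) - (?f B - ?f ?G) / real M"
    by (simp add: left_diff_distrib)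
  ultimately show ?thesis unfolding take_Suc \<delta>_def by linarith
qed

theorem greedy_run_approximation:
  assumes greedy: "greedy_run d Dmax H eh C e M gs" and M: "1 \<le> M"
    and bounded: "\<forall>h\<in>H. \<forall>c\<in>C. d (eh h) (e c) \<le> Dmax"
    and B: "B \<subseteq> C" "finite B" "card B \<le> M"
  shows "(1 - 1 / exp 1) * cov d Dmax H eh B e \<le> cov d Dmax H eh (set gs) e"
proof -
  have "length gs = M" using greedy by (simp add: greedy_run_def)
  then have "set (take M gs) = set gs" by simp
  moreover have "0 \<le> cov d Dmax H eh B e"
    using B bounded by (intro cov_nonneg) auto
  ultimately show ?thesis
    using contracting_gap_bound[OF M, of "\<lambda>i. cov d Dmax H eh (set (take i gs)) e"]
      greedy_run_gap_contracts[OF greedy _ bounded B] by (simp add: cov_empty)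
qed

theorem theorem2:
  fixes d :: "real ^ 'n \<Rightarrow> real ^ 'n \<Rightarrow> real"
    and H :: "'h set" and eh :: "'h \<Rightarrow> real ^ 'n"
    and L :: "'l set" and el :: "'l \<Rightarrow> real ^ 'n"
    and ep :: "'h \<Rightarrow> real ^ 'n"
    and \<rho> Dmax :: real and M :: nat
    and LL :: "'l set" and LH :: "'h set" and gs :: "'h list"
  assumes metric: "Metric_space UNIV d"
    and H_fin: "finite H" and H_ne: "H \<noteq> {}"
    and L_fin: "finite L"
    and rho_nonneg: "\<rho> \<ge> 0"
    and proxy: "\<forall>h\<in>H. d (eh h) (ep h) \<le> \<rho>"
    and Dmax: "\<forall>x\<in>eh ` H \<union> el ` L \<union> ep ` H. \<forall>y\<in>eh ` H \<union> el ` L \<union> ep ` H. d x y < Dmax"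
    and M: "1 \<le> M" "M \<le> card H"
    and LL: "LL \<subseteq> L" "card LL \<le> M"
      "\<forall>L'. L' \<subseteq> L \<and> card L' \<le> M \<longrightarrow> cov d Dmax H eh L' el \<le> cov d Dmax H eh LL el"
    and LH: "LH \<subseteq> H" "card LH \<le> M"
      "\<forall>S. S \<subseteq> H \<and> card S \<le> M \<longrightarrow> cov d Dmax H eh S eh \<le> cov d Dmax H eh LH eh"
    and LL_pos: "cov d Dmax H eh LL el > 0"
    and greedy: "greedy_run d Dmax H eh H ep M gs"
  shows "cov d Dmax H eh (set gs) ep
    \<ge> (1 - 1 / exp 1) * ((cov d Dmax H eh LH eh / cov d Dmax H eh LL el) * cov d Dmax H eh LL el - \<rho>)"
proof -
  have LH_fin: "finite LH" using LH(1) H_fin finite_subset by blast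
  have "d (eh h) (ep s) \<le> d (eh h) (eh s) + \<rho>" if "h \<in> H" "s \<in> LH" for h s
    using Metric_space.triangle[OF metric, of "eh h" "eh s" "ep s"] proxy that LH(1) by force
  then have proxy_cov: "cov d Dmax H eh LH eh - \<rho> \<le> cov d Dmax H eh LH ep"
    using H_fin H_ne LH_fin rho_nonneg by (intro cov_shift_ge) auto
  have "(cov d Dmax H eh LH eh / cov d Dmax H eh LL el) * cov d Dmax H eh LL el - \<rho>
      = cov d Dmax H eh LH eh - \<rho>"
    using LL_pos by simp
  then have "(1 - 1 / exp 1) * ((cov d Dmax H eh LH eh / cov d Dmax H eh LL el) * cov d Dmax H eh LL el - \<rho>)
      \<le> (1 - 1 / exp 1) * cov d Dmax H eh LH ep"
    using proxy_cov by (simp add: mult_left_mono)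
  also have "\<dots> \<le> cov d Dmax H eh (set gs) ep"
    using Dmax LH LH_fin by (intro greedy_run_approximation[OF greedy M(1)]) (auto intro: less_imp_le)
  finally show ?thesis .
qed

end
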